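(* Let $n\ge 2$, $\kappa\ge1$, and let $G\in\mathcal G_{[n;\kappa]}$ be a skew-symmetric game with payoff structure vectors $V_1^c,\dots,V_n^c\in\mathbb R^{\kappa^n}$. Then $$V_i^c=-V_1^c\ltimes W_{[\kappa^{i-2},\kappa]}\ltimes W_{[\kappa,\kappa^{i-1}]},\qquad i=2,\dots,n.$$
   Context: Semi-tensor product: for $A\in\mathbb R^{m\times n}$, $B\in\mathbb R^{p\times q}$ and $t=\mathrm{lcm}(n,p)$, $A\ltimes B=(A\otimes I_{t/n})(B\otimes I_{t/p})$; it is associative and coincides with the Kronecker product on column vectors. Swap matrix: $W_{[m,n]}\in\mathbb R^{mn\times mn}$ is the permutation matrix with $W_{[m,n]}(X\otimes Y)=Y\otimes X$ for all $X\in\mathbb R^m$, $Y\in\mathbb R^n$ (so $W_{[1,n]}=W_{[n,1]}=I_n$). A finite game $G\in\mathcal G_{[n;\kappa]}$ has players $\{1,\dots,n\}$, each with strategy set $\{1,\dots,\kappa\}$, strategy $j$ identified with $\delta_\kappa^j$ (the $j$-th column of $I_\kappa$), and payoffs $c_i$; $V_i^c\in\mathbb R^{\kappa^n}$ is the unique row vector with $c_i(x_1,\dots,x_n)=V_i^c\ltimes x_1\ltimes\cdots\ltimes x_n$ for all $x_j\in\{\delta_\kappa^1,\dots,\delta_\kappa^\kappa\}$. $G$ is skew-symmetric if for every permutation $\sigma\in\mathbf S_n$, every $i$ and every profile, $c_i(x_1,\dots,x_n)=\mathrm{sgn}(\sigma)\,c_{\sigma(i)}(x_{\sigma^{-1}(1)},\dots,x_{\sigma^{-1}(n)})$.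 *)

theory Defs
  imports "Jordan_Normal_Form.Matrix" "HOL-Combinatorics.Permutations"
begin

definition kron :: "real mat \<Rightarrow> real mat \<Rightarrow> real mat" where
  "kron A B = mat (dim_row A * dim_row B) (dim_col A * dim_col B)
     (\<lambda>(i, j). A $$ (i div dim_row B, j div dim_col B) * B $$ (i mod dim_row B, j mod dim_col B))"

definition stp :: "real mat \<Rightarrow> real mat \<Rightarrow> real mat" where
  "stp A B = (let n = dim_col A; p = dim_row B; t = lcm n p in
     kron A (1\<^sub>m (t div n)) * kron B (1\<^sub>m (t div p)))"

text \<open>Swap matrix W_[m,n]: the mn x mn permutation matrix with W (X \<otimes> Y) = Y \<otimes> X.\<close>
definition swap_mat :: "nat \<Rightarrow> nat \<Rightarrow> real mat" where
  "swap_mat m n = mat (m * n) (m * n) (\<lambda>(r, c). if r = (c mod n) * m + c div n then 1 else 0)"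

text \<open>delta_k^j: the j-th column of I_k (j counted from 1).\<close>
definition delta :: "nat \<Rightarrow> nat \<Rightarrow> real mat" where
  "delta k j = mat k 1 (\<lambda>(r, _). if r = j - 1 then 1 else 0)"

definition stp_profile :: "real mat \<Rightarrow> nat \<Rightarrow> nat list \<Rightarrow> real mat" where
  "stp_profile V k xs = foldl stp V (map (delta k) xs)"

definition profiles :: "nat \<Rightarrow> nat \<Rightarrow> nat list set" where
  "profiles n k = {xs. length xs = n \<and> set xs \<subseteq> {1..k}}"

text \<open>Payoffs c i xs for players i \<in> {1..n}; xs ! (j-1) is player j's strategy.
  Skew-symmetry: c_i(x) = sgn(sigma) c_{sigma i}(x_{sigma^-1 1}, ..., x_{sigma^-1 n}).\<close>
definition skew_symmetric :: "nat \<Rightarrow> nat \<Rightarrow> (nat \<Rightarrow> nat list \<Rightarrow> real) \<Rightarrow> bool" where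
  "skew_symmetric n k c \<longleftrightarrow>
     (\<forall>s. s permutes {1..n} \<longrightarrow>
        (\<forall>i\<in>{1..n}. \<forall>xs\<in>profiles n k.
           c i xs = of_int (sign s) * c (s i) (map (\<lambda>j. xs ! (inv_into UNIV s j - 1)) [1..<n+1])))"

end

theory Submission
  imports Defs
begin

(* V \<ltimes> x_1 \<ltimes> ... \<ltimes> x_n at a profile of basis vectors is the entry of V whose index has the
   base-k digits x_1 - 1, ..., x_n - 1, and multiplying a row vector by a swap matrix permutes its
   entries by exchanging two adjacent blocks of digits; the two swap matrices together exchange
   the first and the i-th digit. Skew-symmetry for the transposition (1 i) says that c_i at a
   profile is -c_1 at the profile with the strategies of players 1 and i exchanged, which is the
   claimed identity read entry by entry. *)

(* The position, counted from 0, of the single 1 in delta k x_1 \<ltimes> ... \<ltimes> delta k x_m. *)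
fun kron_index :: "nat \<Rightarrow> nat list \<Rightarrow> nat" where
  "kron_index k [] = 0"
| "kron_index k (x # xs) = (x - 1) * k ^ length xs + kron_index k xs"

lemma kron_index_less: "set xs \<subseteq> {1..k} \<Longrightarrow> kron_index k xs < k ^ length xs"
proof (induction xs)
  case (Cons x xs)
  then have "x - 1 < k" and "kron_index k xs < k ^ length xs" by auto
  then have "(x - 1) * k ^ length xs + kron_index k xs < (x - 1 + 1) * k ^ length xs"
    by simp
  also have "\<dots> \<le> k * k ^ length xs"
    using \<open>x - 1 < k\<close> by (intro mult_right_mono) auto
  finally show ?case by simp
qed simp

lemma kron_index_append:
  "kron_index k (xs @ ys) = kron_index k xs * k ^ length ys + kron_index k ys"
  by (induction xs) (simp_all add: algebra_simps power_add)

lemma kron_index_surj: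
  assumes "k \<ge> 1" "j < k ^ m"
  shows "\<exists>xs. length xs = m \<and> set xs \<subseteq> {1..k} \<and> kron_index k xs = j"
  using assms(2)
proof (induction m arbitrary: j)
  case (Suc m)
  have "k ^ m > 0" using assms(1) by simp
  then obtain xs where xs: "length xs = m" "set xs \<subseteq> {1..k}" "kron_index k xs = j mod k ^ m"
    using Suc.IH[of "j mod k ^ m"] by auto
  have "j div k ^ m < k"
    using Suc.prems less_mult_imp_div_less[of j k "k ^ m"] by (simp add: mult.commute)
  then show ?case
    using xs by (intro exI[of _ "(j div k ^ m + 1) # xs"]) (auto simp: div_mult_mod_eq)
qed simp

lemma map_transpose_first:
  "map (\<lambda>j. (a # mid @ b # rest) ! (Transposition.transpose 1 (length mid + 2) j - 1))
      [1..<length (a # mid @ b # rest) + 1] = b # mid @ a # rest" (is "?xs = _")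
proof (rule nth_equalityI)
  fix p assume "p < length ?xs"
  then have p: "p < length mid + length rest + 2" by (simp del: upt_Suc)
  consider "p = 0" | "p = length mid + 1" | "0 < p" "p \<le> length mid" | "length mid + 1 < p"
    by linarith
  then show "?xs ! p = (b # mid @ a # rest) ! p"
    using p by cases (auto simp: nth_append nth_Cons' transpose_def simp del: upt_Suc)
qed (simp del: upt_Suc)

lemma kron_one_right: "kron A (1\<^sub>m 1) = A"
  by (intro eq_matI) (auto simp: kron_def)

lemma stp_eq_mult_kron:
  assumes "dim_col A = dim_row B * q" "0 < dim_row B" "0 < q"
  shows "stp A B = A * kron B (1\<^sub>m q)"
  using assms by (simp add: stp_def kron_one_right[unfolded One_nat_def])

lemma mixed_radix_less:
  fixes u w q :: nat
  assumes "u < p" "w < q"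
  shows "u * q + w < p * q"
proof -
  have "u * q + w < (u + 1) * q" using assms(2) by simp
  also have "\<dots> \<le> p * q" using assms(1) by (intro mult_right_mono) auto
  finally show ?thesis .
qed

(* Both delta k x and the swap matrices have this shape: a single 1 in each column c, at row f c. *)
lemma row_mult_kron_selection:
  fixes f :: "nat \<Rightarrow> nat"
  assumes V: "dim_row V = 1" "dim_col V = p * q" and f: "\<forall>c<m. f c < p"
  shows "V * kron (mat p m (\<lambda>(r, c). if r = f c then 1 else 0)) (1\<^sub>m q) =
         mat 1 (m * q) (\<lambda>(_, j). V $$ (0, f (j div q) * q + j mod q))"
    (is "V * ?K = ?R")
proof (rule eq_matI)
  fix i j assume "i < dim_row ?R" "j < dim_col ?R"
  then have i: "i = 0" and j: "j < m * q" by auto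
  then have q: "0 < q" by (cases q) auto
  have jq: "j div q < m" using j by (simp add: div_less_iff_less_mult q)
  define l0 where "l0 = f (j div q) * q + j mod q"
  have l0: "l0 < p * q"
    unfolding l0_def using f jq q by (intro mixed_radix_less) auto
  have K: "?K $$ (l, j) = (if l = l0 then 1 else 0)" if "l < p * q" for l
  proof -
    have "(l div q = f (j div q) \<and> l mod q = j mod q) \<longleftrightarrow> l = l0"
      unfolding l0_def
    proof
      assume "l div q = f (j div q) \<and> l mod q = j mod q"
      then show "l = f (j div q) * q + j mod q" by (metis div_mult_mod_eq)
    qed (use q in simp)
    then show ?thesis
      using that j jq q by (auto simp: kron_def div_less_iff_less_mult)
  qed
  have "(V * ?K) $$ (i, j) = (\<Sum>l<p * q. V $$ (0, l) * (if l = l0 then 1 else 0))"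
    using i j V K by (auto simp: kron_def scalar_prod_def atLeast0LessThan intro: sum.cong)
  also have "\<dots> = V $$ (0, l0)" using l0 by (simp add: if_distrib cong: if_cong)
  finally show "(V * ?K) $$ (i, j) = ?R $$ (i, j)" using i j by (simp add: l0_def)
qed (use V in \<open>auto simp: kron_def\<close>)

lemma stp_delta_row:
  assumes V: "dim_row V = 1" "dim_col V = k * q" and x: "1 \<le> x" "x \<le> k" and q: "0 < q"
  shows "stp V (delta k x) = mat 1 q (\<lambda>(_, j). V $$ (0, (x - 1) * q + j))"
proof -
  have "delta k x = mat k 1 (\<lambda>(r, c). if r = (\<lambda>_. x - 1) c then 1 else 0)"
    by (simp add: delta_def case_prod_beta)
  then have "stp V (delta k x) = mat 1 (1 * q) (\<lambda>(_, j). V $$ (0, (x - 1) * q + j mod q))"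
    using V x q stp_eq_mult_kron[of V "delta k x" q] row_mult_kron_selection[of V k q 1 "\<lambda>_. x - 1"]
    by (simp add: delta_def)
  also have "\<dots> = mat 1 q (\<lambda>(_, j). V $$ (0, (x - 1) * q + j))"
    by (rule eq_matI) auto
  finally show ?thesis .
qed

lemma stp_profile_nth:
  assumes "dim_row V = 1" "dim_col V = k ^ length xs" "set xs \<subseteq> {1..k}"
  shows "stp_profile V k xs $$ (0, 0) = V $$ (0, kron_index k xs)"
  using assms
proof (induction xs arbitrary: V)
  case Nil then show ?case by (simp add: stp_profile_def)
next
  case (Cons x xs)
  have x: "1 \<le> x" "x \<le> k" using Cons.prems by auto
  define W where "W = stp V (delta k x)"
  have W: "W = mat 1 (k ^ length xs) (\<lambda>(_, j). V $$ (0, (x - 1) * k ^ length xs + j))"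
    unfolding W_def using Cons.prems x by (intro stp_delta_row) auto
  have "stp_profile V k (x # xs) $$ (0, 0) = stp_profile W k xs $$ (0, 0)"
    by (simp add: stp_profile_def W_def)
  also have "\<dots> = W $$ (0, kron_index k xs)"
    using Cons.IH[of W] Cons.prems W by simp
  also have "\<dots> = V $$ (0, kron_index k (x # xs))"
    using W kron_index_less[of xs k] Cons.prems by simp
  finally show ?case .
qed

lemma stp_swap_mat_row:
  assumes V: "dim_row V = 1" "dim_col V = m * n * q" and "0 < m" "0 < n" "0 < q"
  shows "stp V (swap_mat m n) =
    mat 1 (m * n * q) (\<lambda>(_, j). V $$ (0, ((j div q) mod n * m + (j div q) div n) * q + j mod q))"
proof -
  have "(c mod n) * m + c div n < m * n" if "c < m * n" for c
    using mixed_radix_less[of "c mod n" n "c div n" m] that \<open>0 < n\<close>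
    by (simp add: div_less_iff_less_mult mult.commute)
  then show ?thesis
    using assms stp_eq_mult_kron[of V "swap_mat m n" q]
      row_mult_kron_selection[of V "m * n" q "m * n" "\<lambda>c. (c mod n) * m + c div n"]
    by (simp add: swap_mat_def)
qed

lemma stp_swap_mat_row_nth:
  assumes V: "dim_row V = 1" "dim_col V = m * n * q" and "u < m" "w < n" "d < q"
  shows "stp V (swap_mat m n) $$ (0, (u * n + w) * q + d) = V $$ (0, (w * m + u) * q + d)"
proof -
  have "u * n + w < m * n" using assms by (intro mixed_radix_less)
  then have "(u * n + w) * q + d < m * n * q" using assms by (intro mixed_radix_less)
  then show ?thesis
    using assms stp_swap_mat_row[OF V] by simp
qed

lemma dim_stp_swap_mat_row:
  assumes "dim_row V = 1" "dim_col V = m * n * q" "0 < m" "0 < n" "0 < q"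
  shows "dim_row (stp V (swap_mat m n)) = 1" "dim_col (stp V (swap_mat m n)) = m * n * q"
  using stp_swap_mat_row[OF assms] by simp_all

lemma dim_stp_swap_mats:
  assumes V: "dim_row V = 1" "dim_col V = k ^ (l + r + 2)" and k: "0 < k"
  shows "dim_row (stp (stp V (swap_mat (k ^ l) k)) (swap_mat k (k ^ Suc l))) = 1"
    "dim_col (stp (stp V (swap_mat (k ^ l) k)) (swap_mat k (k ^ Suc l))) = k ^ (l + r + 2)"
proof -
  have "dim_col V = k ^ l * k * (k * k ^ r)" using V by (simp add: power_add ac_simps)
  then have S: "dim_row (stp V (swap_mat (k ^ l) k)) = 1"
      "dim_col (stp V (swap_mat (k ^ l) k)) = k * k ^ Suc l * k ^ r"
    using dim_stp_swap_mat_row[OF V(1)] k by (auto simp: ac_simps)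
  show "dim_row (stp (stp V (swap_mat (k ^ l) k)) (swap_mat k (k ^ Suc l))) = 1"
    "dim_col (stp (stp V (swap_mat (k ^ l) k)) (swap_mat k (k ^ Suc l))) = k ^ (l + r + 2)"
    using dim_stp_swap_mat_row[OF S] k by (auto simp: power_add ac_simps)
qed

lemma stp_swap_mats_transpose_factors:
  assumes V: "dim_row V = 1" "dim_col V = k ^ length (a # mid @ b # rest)"
    and xs: "set (a # mid @ b # rest) \<subseteq> {1..k}"
  shows "stp (stp V (swap_mat (k ^ length mid) k)) (swap_mat k (k ^ Suc (length mid)))
           $$ (0, kron_index k (a # mid @ b # rest))
         = V $$ (0, kron_index k (b # mid @ a # rest))"
proof -
  define K Q where "K = k ^ length mid" and "Q = k ^ length rest"
  define A B C D where "A = a - 1" and "B = kron_index k mid" and "C = b - 1"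
    and "D = kron_index k rest"
  have k: "0 < k" using xs by auto
  have ABCD: "A < k" "B < K" "C < k" "D < Q"
    using xs kron_index_less[of mid k] kron_index_less[of rest k]
    unfolding A_def B_def C_def D_def K_def Q_def by auto
  have dimV: "dim_col V = K * k * (k * Q)"
    using V unfolding K_def Q_def by (simp add: power_add ac_simps)
  define S where "S = stp V (swap_mat K k)"
  have S: "dim_row S = 1" "dim_col S = k * (K * k) * Q"
    using dim_stp_swap_mat_row[OF V(1) dimV] ABCD k unfolding S_def by (auto simp: ac_simps)
  (* The first swap exchanges the digit blocks mid and b, the second then a and mid b. *)
  have "kron_index k (a # mid @ b # rest) = (A * (K * k) + (B * k + C)) * Q + D"
    unfolding A_def B_def C_def D_def K_def Q_def
    by (simp add: kron_index_append algebra_simps power_add)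
  moreover have "B * k + C < K * k" using ABCD by (intro mixed_radix_less)
  ultimately have "stp S (swap_mat k (K * k)) $$ (0, kron_index k (a # mid @ b # rest))
      = S $$ (0, (B * k + C) * (k * Q) + (A * Q + D))"
    using stp_swap_mat_row_nth[OF S, of A "B * k + C" D] ABCD by (simp add: algebra_simps)
  also have "\<dots> = V $$ (0, (C * K + B) * (k * Q) + (A * Q + D))"
    using stp_swap_mat_row_nth[OF V(1) dimV, of B C "A * Q + D"] ABCD mixed_radix_less[of A k D Q]
    unfolding S_def by (simp add: ac_simps)
  also have "(C * K + B) * (k * Q) + (A * Q + D) = kron_index k (b # mid @ a # rest)"
    unfolding A_def B_def C_def D_def K_def Q_def
    by (simp add: kron_index_append algebra_simps power_add)
  finally show ?thesis unfolding S_def K_def by (simp add: mult.commute)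
qed

lemma skew_symmetric_swap_first:
  assumes c: "skew_symmetric n k c" and xs: "a # mid @ b # rest \<in> profiles n k"
  shows "c (length mid + 2) (a # mid @ b # rest) = - c 1 (b # mid @ a # rest)"
proof -
  define s where "s = Transposition.transpose 1 (length mid + 2)"
  have n: "n = length (a # mid @ b # rest)" using xs by (simp add: profiles_def)
  have "s permutes {1..n}" unfolding s_def n by (intro permutes_swap_id) auto
  then have "\<forall>i\<in>{1..n}. \<forall>xs\<in>profiles n k.
      c i xs = of_int (sign s) * c (s i) (map (\<lambda>j. xs ! (inv_into UNIV s j - 1)) [1..<n+1])"
    using c unfolding skew_symmetric_def by blast
  moreover have "length mid + 2 \<in> {1..n}" using n by simp
  ultimately have "c (length mid + 2) (a # mid @ b # rest) = of_int (sign s) * c (s (length mid + 2))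
      (map (\<lambda>j. (a # mid @ b # rest) ! (inv_into UNIV s j - 1)) [1..<n+1])"
    using xs by blast
  moreover have "inv_into UNIV s = s" "sign s = -1" "s (length mid + 2) = 1"
    unfolding s_def by (simp_all add: sign_swap_id)
  ultimately show ?thesis
    using map_transpose_first[of a mid b rest] unfolding s_def n by simp
qed

lemma payoff_vector_transpose_first:
  assumes c: "skew_symmetric n k c"
    and V: "\<forall>i\<in>{1..n}. dim_row (V i) = 1 \<and> dim_col (V i) = k ^ n"
    and cV: "\<forall>i\<in>{1..n}. \<forall>xs\<in>profiles n k. c i xs = stp_profile (V i) k xs $$ (0, 0)"
    and xs: "a # mid @ b # rest \<in> profiles n k"
  shows "V (length mid + 2) $$ (0, kron_index k (a # mid @ b # rest))
    = - V 1 $$ (0, kron_index k (b # mid @ a # rest))"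
proof -
  have ys: "b # mid @ a # rest \<in> profiles n k" and i: "length mid + 2 \<in> {1..n}"
    using xs by (auto simp: profiles_def)
  have "V (length mid + 2) $$ (0, kron_index k (a # mid @ b # rest)) = c (length mid + 2) (a # mid @ b # rest)"
    using V cV i xs stp_profile_nth[of "V (length mid + 2)" k] by (auto simp: profiles_def)
  also have "\<dots> = - c 1 (b # mid @ a # rest)"
    using skew_symmetric_swap_first[OF c xs] .
  also have "\<dots> = - V 1 $$ (0, kron_index k (b # mid @ a # rest))"
    using V cV i ys stp_profile_nth[of "V 1" k] by (auto simp: profiles_def)
  finally show ?thesis .
qed

lemma split_first_and_nth:
  assumes "length ys = l + r + 2"
  obtains a mid b rest where "ys = a # mid @ b # rest" "length mid = l" "length rest = r"
proof -
  obtain a t where ys: "ys = a # t" using assms by (cases ys) auto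
  then have "l < length t" using assms by simp
  then have "t = take l t @ t ! l # drop (Suc l) t"
    by (simp add: id_take_nth_drop)
  moreover have "length (take l t) = l" "length (drop (Suc l) t) = r"
    using assms ys \<open>l < length t\<close> by simp_all
  ultimately show ?thesis using that ys by blast
qed

theorem proposition3p8:
  fixes n k :: nat and c :: "nat \<Rightarrow> nat list \<Rightarrow> real" and V :: "nat \<Rightarrow> real mat"
  assumes "n \<ge> 2" and "k \<ge> 1"
    and "skew_symmetric n k c"
    and "\<forall>i\<in>{1..n}. dim_row (V i) = 1 \<and> dim_col (V i) = k ^ n"
    and "\<forall>i\<in>{1..n}. \<forall>xs\<in>profiles n k. c i xs = stp_profile (V i) k xs $$ (0, 0)"
  shows "\<forall>i\<in>{2..n}. V i = - stp (stp (V 1) (swap_mat (k ^ (i - 2)) k)) (swap_mat k (k ^ (i - 1)))"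
proof
  fix i assume "i \<in> {2..n}"
  then have "i = (i - 2) + 2" "n = (i - 2) + (n - i) + 2" by auto
  then obtain l r where i: "i = l + 2" and n: "n = l + r + 2" by blast
  have V1: "dim_row (V 1) = 1" "dim_col (V 1) = k ^ (l + r + 2)"
    and Vi: "dim_row (V i) = 1" "dim_col (V i) = k ^ n"
    using assms(4) i n by auto
  let ?R = "stp (stp (V 1) (swap_mat (k ^ l) k)) (swap_mat k (k ^ Suc l))"
  have R: "dim_row ?R = 1" "dim_col ?R = k ^ n"
    using dim_stp_swap_mats[OF V1] assms(2) n by simp_all
  have "V i = - ?R"
  proof (rule eq_matI)
    fix r' j assume "r' < dim_row (- ?R)" "j < dim_col (- ?R)"
    then have r': "r' = 0" and j: "j < k ^ n" using R by auto
    then obtain ys where ys: "ys \<in> profiles n k" "kron_index k ys = j"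
      using kron_index_surj[OF assms(2)] by (auto simp: profiles_def)
    have "length ys = l + r + 2" using ys n by (simp add: profiles_def)
    then obtain a mid b rest where split: "ys = a # mid @ b # rest" "length mid = l" "length rest = r"
      by (rule split_first_and_nth)
    have "V i $$ (0, j) = - V 1 $$ (0, kron_index k (b # mid @ a # rest))"
      unfolding i ys(2)[symmetric] split(1) split(2)[symmetric]
      using payoff_vector_transpose_first[OF assms(3-5) ys(1)[unfolded split(1)]] .
    also have "\<dots> = - ?R $$ (0, j)"
    proof -
      have "dim_col (V 1) = k ^ length (a # mid @ b # rest)"
        using V1(2) split(2,3) by simp
      moreover have "set (a # mid @ b # rest) \<subseteq> {1..k}"
        using ys(1) split(1) by (simp add: profiles_def)
      ultimately show ?thesis
        using stp_swap_mats_transpose_factors[OF V1(1)]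
        unfolding ys(2)[symmetric] split(1) split(2)[symmetric] by simp
    qed
    finally show "V i $$ (r', j) = (- ?R) $$ (r', j)" using r' j R by simp
  qed (use R Vi in simp_all)
  then show "V i = - stp (stp (V 1) (swap_mat (k ^ (i - 2)) k)) (swap_mat k (k ^ (i - 1)))"
    using i by simp
qed

end
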